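(* Let $a$ be a strongly regular scale factor and fix $\tau>0$. For $0<\rho<\rho_{\mathcal M_\tau}$ let $t_0=t_0(\tau,\rho)\in(0,\tau)$ be defined by $\rho=\int_{t_0}^{\tau}\frac{a(t)}{\sqrt{a^2(\tau)-a^2(t)}}dt$, and let \[ g_{\tau\tau}(\tau,\rho)=-\left[1-\dot a(\tau)\int_{t_0}^{\tau}\frac{\ddot a(t)}{\dot a(t)^2}\left(\frac{\sqrt{a^2(\tau)-a^2(t_0)}}{\sqrt{a^2(\tau)-a^2(t)}}-1\right)dt\right]^2 . \] Then \[ \lim_{\rho\to\rho_{\mathcal M_\tau}^-}g_{\tau\tau}(\tau,\rho)=-\left[1-\dot a(\tau)\int_{0}^{\tau}\frac{\ddot a(t)}{\dot a(t)^2}\left(\frac{a(\tau)}{\sqrt{a^2(\tau)-a^2(t)}}-1\right)dt\right]^2, \] and the value $g_{\tau\tau}(\tau,\rho_{\mathcal M_\tau})$ defined by this limit satisfies $\infty>-g_{\tau\tau}(\tau,\rho_{\mathcal M_\tau})>0$.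
   Context: A function $a:[0,\infty)\to[0,\infty)$ is a regular scale factor if: (a) $a(0)=0$; (b) $a$ is increasing and continuous on $[0,\infty)$ and twice continuously differentiable on $(0,\infty)$, with an inverse function on $[0,\infty)$; (c) for all $t>0$, $\frac{a(t)\ddot a(t)}{\dot a(t)^2}\le 1$ (the quotient presupposes $\dot a(t)\neq0$ for $t>0$). It is strongly regular if, in addition, there is a constant $K\ge 1$ with $\frac{a(t)\ddot a(t)}{\dot a(t)^2}\ge -K$ for all $t>0$. For $\tau>0$, $\rho_{\mathcal M_\tau}=\int_0^\tau \frac{a(t)}{\sqrt{a^2(\tau)-a^2(t)}}dt$ (the Fermi radius at proper time $\tau$). The function $g_{\tau\tau}$ is the $d\tau^2$ coefficient of the Robertson–Walker metric $-dt^2+a^2(t)[d\chi^2+\dots]$ written in Fermi coordinates $(\tau,\rho,\dots)$ of the comoving observer at $\chi=0$; $\rho\to\rho_{\mathcal M_\tau}^-$ corresponds to $t_0\to0^+$. *)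

theory Defs
  imports "HOL-Analysis.Analysis"
begin

definition regular_scale_factor ::
  "(real \<Rightarrow> real) \<Rightarrow> (real \<Rightarrow> real) \<Rightarrow> (real \<Rightarrow> real) \<Rightarrow> bool" where
  "regular_scale_factor a a' a'' \<longleftrightarrow>
     a 0 = 0 \<and>
     (\<forall>t\<ge>0. a t \<ge> 0) \<and>
     strict_mono_on {0..} a \<and>
     continuous_on {0..} a \<and>
     (\<forall>t>0. (a has_real_derivative a' t) (at t)) \<and>
     (\<forall>t>0. (a' has_real_derivative a'' t) (at t)) \<and>
     continuous_on {0<..} a'' \<and>
     (\<forall>t>0. a' t \<noteq> 0) \<and>
     (\<forall>t>0. a t * a'' t / (a' t)\<^sup>2 \<le> 1)"

definition strongly_regular_scale_factor ::
  "(real \<Rightarrow> real) \<Rightarrow> (real \<Rightarrow> real) \<Rightarrow> (real \<Rightarrow> real) \<Rightarrow> bool" where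
  "strongly_regular_scale_factor a a' a'' \<longleftrightarrow>
     regular_scale_factor a a' a'' \<and>
     (\<exists>K\<ge>1. \<forall>t>0. a t * a'' t / (a' t)\<^sup>2 \<ge> - K)"

definition fermi_radius :: "(real \<Rightarrow> real) \<Rightarrow> real \<Rightarrow> real" where
  "fermi_radius a \<tau> = integral {0..\<tau>} (\<lambda>t. a t / sqrt ((a \<tau>)\<^sup>2 - (a t)\<^sup>2))"

definition fermi_t0 :: "(real \<Rightarrow> real) \<Rightarrow> real \<Rightarrow> real \<Rightarrow> real" where
  "fermi_t0 a \<tau> \<rho> = (THE t0. 0 < t0 \<and> t0 < \<tau> \<and>
       \<rho> = integral {t0..\<tau>} (\<lambda>t. a t / sqrt ((a \<tau>)\<^sup>2 - (a t)\<^sup>2)))"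

definition g_tautau ::
  "(real \<Rightarrow> real) \<Rightarrow> (real \<Rightarrow> real) \<Rightarrow> (real \<Rightarrow> real) \<Rightarrow> real \<Rightarrow> real \<Rightarrow> real" where
  "g_tautau a a' a'' \<tau> \<rho> =
     (let t0 = fermi_t0 a \<tau> \<rho> in
      - (1 - a' \<tau> * integral {t0..\<tau>}
           (\<lambda>t. a'' t / (a' t)\<^sup>2 *
                 (sqrt ((a \<tau>)\<^sup>2 - (a t0)\<^sup>2) / sqrt ((a \<tau>)\<^sup>2 - (a t)\<^sup>2) - 1)))\<^sup>2)"

end

theory Submission
  imports Defs
begin

text \<open>Write \<open>s(t) = sqrt (a(\<tau>)\<^sup>2 - a(t)\<^sup>2)\<close>. The function \<open>\<psi> = (a / (a(\<tau>) + s))'\<close>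
  is nonnegative with integral \<open>1\<close> over \<open>[0, \<tau>]\<close>. Regularity (\<open>a a'' \<le> a'\<^sup>2\<close>) makes
  \<open>a/a'\<close> nondecreasing, so \<open>a \<le> (a(\<tau>)/a'(\<tau>)) a'\<close>; this bounds the Fermi-radius integrand
  \<open>a/s\<close>, and together with \<open>|a a''/a'\<^sup>2| \<le> K\<close> all integrands of \<open>g\<^sub>\<tau>\<^sub>\<tau>\<close> with
  \<open>t\<^sub>0 \<le> \<tau>/2\<close>, by multiples of \<open>\<psi>\<close>. Dominated convergence gives the limit
  \<open>t\<^sub>0 \<rightarrow> 0\<close>, which is the limit \<open>\<rho> \<rightarrow> \<rho>\<^sub>M\<close> because \<open>\<rho>(t\<^sub>0)\<close> is continuous and strictly
  decreasing. Finally \<open>\<psi> - a'(\<tau>) F \<ge> (a(\<tau>)/s - 1) (a(\<tau>) a'/a - a'(\<tau>)) / a \<ge> 0\<close>, strictly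
  where \<open>a/a' < a(\<tau>)/a'(\<tau>)\<close>, which happens somewhere since \<open>a(0) = 0\<close> forbids \<open>a/a'\<close>
  from being constant; hence \<open>1 - a'(\<tau>) \<integral> F = \<integral> (\<psi> - a'(\<tau>) F) > 0\<close>.\<close>

lemma integrable_on_Ioo_by_bound:
  fixes f g :: "real \<Rightarrow> real"
  assumes "continuous_on {c<..<d} f" "g integrable_on {c<..<d}"
    and "\<And>x. x \<in> {c<..<d} \<Longrightarrow> \<bar>f x\<bar> \<le> g x"
  shows "f integrable_on {c<..<d}"
  by (rule measurable_bounded_by_integrable_imp_integrable_real[OF
        continuous_imp_measurable_on_sets_lebesgue[OF assms(1)] assms(2,3)]) auto

lemma integral_Ioo_pos_if_pos_at:
  fixes f :: "real \<Rightarrow> real"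
  assumes int: "f integrable_on {c<..<d}" and cont: "continuous_on {c<..<d} f"
    and nonneg: "\<And>x. x \<in> {c<..<d} \<Longrightarrow> 0 \<le> f x"
    and x0: "x0 \<in> {c<..<d}" and pos: "0 < f x0"
  shows "0 < integral {c<..<d} f"
proof -
  have "\<forall>\<^sub>F y in at x0. 0 < f y"
    using cont x0 pos by (intro order_tendstoD(1)) (auto simp: continuous_on_eq_continuous_at isCont_def)
  then obtain \<delta> where \<delta>: "\<delta> > 0" and near: "\<And>y. y \<noteq> x0 \<Longrightarrow> dist y x0 < \<delta> \<Longrightarrow> 0 < f y"
    unfolding eventually_at by blast
  define e where "e = min (\<delta>/2) (min ((x0 - c)/2) ((d - x0)/2))"
  have "e \<le> (x0 - c)/2" "e \<le> (d - x0)/2" "e \<le> \<delta>/2" "0 < e"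
    using \<delta> x0 by (auto simp: e_def min_def)
  then have e: "0 < e" "e < \<delta>" "c < x0 - e" "x0 + e < d"
    using \<delta> x0 by auto
  then have sub: "{x0-e..x0+e} \<subseteq> {c<..<d}" by auto
  have "0 < integral {x0-e..x0+e} f"
  proof -
    have "0 < f x" if "x \<in> {x0-e<..<x0+e}" for x
      using pos near[of x] that e by (cases "x = x0") (auto simp: dist_real_def)
    then have "integral {x0-e..x0+e} (\<lambda>_. 0) < integral {x0-e..x0+e} f"
      using e continuous_on_subset[OF cont sub] by (intro integral_less_real) auto
    then show ?thesis by simp
  qed
  also have "\<dots> \<le> integral {c<..<d} f"
  proof (rule integral_subset_le[OF sub _ int])
    have "f integrable_on {c..d}"
      using int integrable_on_open_interval_real by blast
    then show "f integrable_on {x0-e..x0+e}"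
      by (rule integrable_subinterval_real) (use e in auto)
  qed (use nonneg in auto)
  finally show ?thesis .
qed

locale scale_factor =
  fixes a a' a'' :: "real \<Rightarrow> real"
  assumes regular: "regular_scale_factor a a' a''"
begin

lemma a_zero: "a 0 = 0"
  using regular by (simp add: regular_scale_factor_def)

lemma a_strict_mono: "0 \<le> x \<Longrightarrow> x < y \<Longrightarrow> a x < a y"
  using regular unfolding regular_scale_factor_def strict_mono_on_def by auto

lemma a_mono: "0 \<le> x \<Longrightarrow> x \<le> y \<Longrightarrow> a x \<le> a y"
  using a_strict_mono[of x y] by (cases "x = y") auto

lemma a_pos: "0 < t \<Longrightarrow> 0 < a t"
  using a_strict_mono[of 0 t] a_zero by simp

lemma a_nonneg: "0 \<le> t \<Longrightarrow> 0 \<le> a t"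
  using a_mono[of 0 t] a_zero by simp

lemma continuous_on_a: "continuous_on {0..} a"
  using regular by (simp add: regular_scale_factor_def)

lemma has_derivative_a: "0 < t \<Longrightarrow> (a has_real_derivative a' t) (at t)"
  using regular by (simp add: regular_scale_factor_def)

lemma has_derivative_a': "0 < t \<Longrightarrow> (a' has_real_derivative a'' t) (at t)"
  using regular by (simp add: regular_scale_factor_def)

lemma isCont_a: "0 < t \<Longrightarrow> isCont a t"
  using has_derivative_a DERIV_isCont by blast

lemma isCont_a': "0 < t \<Longrightarrow> isCont a' t"
  using has_derivative_a' DERIV_isCont by blast

lemma isCont_a'': "0 < t \<Longrightarrow> isCont a'' t"
  using regular by (simp add: regular_scale_factor_def continuous_on_eq_continuous_at)

lemma a'_nonzero: "0 < t \<Longrightarrow> a' t \<noteq> 0"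
  using regular by (simp add: regular_scale_factor_def)

lemma a'_pos: "0 < t \<Longrightarrow> 0 < a' t"
proof (rule ccontr)
  assume t: "0 < t" and "\<not> 0 < a' t"
  then have "a' t < 0"
    using a'_nonzero[OF t] by linarith
  from DERIV_neg_dec_right[OF has_derivative_a[OF t] this] obtain d where "d > 0"
    and "\<And>h. 0 < h \<Longrightarrow> h < d \<Longrightarrow> a (t + h) < a t" by blast
  then have "a (t + d/2) < a t" by simp
  then show False
    using a_strict_mono[of t "t + d/2"] t \<open>d > 0\<close> by simp
qed

lemma curvature_ratio_le: "0 < t \<Longrightarrow> a t * a'' t / (a' t)\<^sup>2 \<le> 1"
  using regular unfolding regular_scale_factor_def by blast

lemma curvature_le: "0 < t \<Longrightarrow> a t * a'' t \<le> (a' t)\<^sup>2"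
  using curvature_ratio_le[of t] a'_pos[of t] by (simp add: divide_le_eq)

text \<open>The condition \<open>a a''/a'\<^sup>2 \<le> 1\<close> says exactly that \<open>(a/a')' \<ge> 0\<close>.\<close>
lemma a_div_a'_mono:
  assumes "0 < x" "x \<le> y"
  shows "a x / a' x \<le> a y / a' y"
proof (rule DERIV_nonneg_imp_increasing_open[OF assms(2)])
  fix z assume z: "x < z" "z < y"
  then have "0 < z" using assms by simp
  then have "((\<lambda>t. a t / a' t) has_real_derivative ((a' z)\<^sup>2 - a z * a'' z) / (a' z)\<^sup>2) (at z)"
    using DERIV_divide[OF has_derivative_a has_derivative_a'] a'_pos
    by (force simp: power2_eq_square)
  moreover have "0 \<le> ((a' z)\<^sup>2 - a z * a'' z) / (a' z)\<^sup>2"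
    using curvature_le[OF \<open>0 < z\<close>] by simp
  ultimately show "\<exists>D. ((\<lambda>t. a t / a' t) has_real_derivative D) (at z) \<and> 0 \<le> D" by blast
next
  show "continuous_on {x..y} (\<lambda>t. a t / a' t)"
    using assms a'_pos isCont_a isCont_a'
    by (intro continuous_at_imp_continuous_on ballI continuous_intros) (auto simp: a'_nonzero)
qed

text \<open>If \<open>a = k a'\<close> on \<open>(0,T)\<close> then \<open>a(t) e\<^sup>-\<^sup>t\<^sup>/\<^sup>k\<close> is a positive constant there,
  which is incompatible with \<open>a(0) = 0\<close>.\<close>
lemma a_div_a'_not_constant:
  assumes T: "0 < T"
  shows "\<exists>t\<in>{0<..<T}. a t / a' t < a T / a' T"
proof (rule ccontr)
  assume "\<not> ?thesis"
  then have const: "a t / a' t = a T / a' T" if "0 < t" "t < T" for t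
    using a_div_a'_mono[of t T] that by force
  define k where "k = a T / a' T"
  have k: "0 < k" unfolding k_def using a_pos a'_pos T by simp
  define e where "e t = a t * exp (- t / k)" for t
  have "e (T/2) = e x" if x: "0 < x" "x < T/2" for x
  proof (rule DERIV_isconst2[of x "T/2" e])
    show "continuous_on {x..T/2} e"
      unfolding e_def using x k by (intro continuous_at_imp_continuous_on ballI continuous_intros isCont_a) auto
    fix y assume y: "x < y" "y < T/2"
    have "(e has_real_derivative a' y * exp (- y / k) - a y * exp (- y / k) / k) (at y)"
      unfolding e_def using has_derivative_a[of y] x y k
      by (auto intro!: derivative_eq_intros simp: field_simps)
    moreover have "a y = k * a' y"
      using const[of y] a'_pos[of y] x y unfolding k_def by (simp add: field_simps)
    ultimately show "(e has_real_derivative 0) (at y)" using k by simp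
  qed (use x in auto)
  then have lower: "e (T/2) \<le> a x" if "0 < x" "x < T/2" for x
    using that k a_nonneg[of x] unfolding e_def by (simp add: mult_left_le)
  have "(a \<longlongrightarrow> 0) (at_right 0)"
    using continuous_on_Icc_at_rightD[of 0 T a] continuous_on_subset[OF continuous_on_a] a_zero T
    by auto
  moreover have "0 < e (T/2)"
    unfolding e_def using a_pos T by simp
  ultimately have "\<forall>\<^sub>F x in at_right 0. a x < e (T/2) \<and> x \<in> {0<..<T/2}"
    using T by (intro eventually_conj order_tendstoD(2) eventually_at_right_real) auto
  then obtain x where "0 < x" "x < T/2" "a x < e (T/2)"
    using eventually_happens'[OF trivial_limit_at_right_real] by auto
  then show False using lower by fastforce
qed

end

locale scale_factor_at = scale_factor +
  fixes \<tau> :: real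
  assumes tau_pos: "0 < \<tau>"
begin

abbreviation "A \<equiv> a \<tau>"
abbreviation "s t \<equiv> sqrt (A\<^sup>2 - (a t)\<^sup>2)"

lemma A_pos: "0 < A"
  using a_pos tau_pos by simp

lemma a_sq_le_A_sq: "0 \<le> t \<Longrightarrow> t \<le> \<tau> \<Longrightarrow> (a t)\<^sup>2 \<le> A\<^sup>2"
  using a_mono a_nonneg by (simp add: power_mono)

lemma s_sq: "0 \<le> t \<Longrightarrow> t \<le> \<tau> \<Longrightarrow> (s t)\<^sup>2 = A\<^sup>2 - (a t)\<^sup>2"
  using a_sq_le_A_sq by simp

lemma s_nonneg: "0 \<le> t \<Longrightarrow> t \<le> \<tau> \<Longrightarrow> 0 \<le> s t"
  using a_sq_le_A_sq by simp

lemma s_pos: "0 \<le> t \<Longrightarrow> t < \<tau> \<Longrightarrow> 0 < s t"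
  using a_strict_mono[of t \<tau>] a_nonneg[of t] by (simp add: power_strict_mono)

lemma s_zero: "s 0 = A"
  using a_zero A_pos by simp

lemma s_antimono: "0 \<le> x \<Longrightarrow> x \<le> y \<Longrightarrow> s y \<le> s x"
  using a_mono[of x y] a_nonneg[of x] by (intro real_sqrt_le_mono) (simp add: power_mono)

lemma s_le_A: "0 \<le> t \<Longrightarrow> s t \<le> A"
  using s_antimono[of 0 t] s_zero by simp

lemma s_lt_A: "0 < t \<Longrightarrow> s t < A"
proof -
  assume "0 < t"
  then have "A\<^sup>2 - (a t)\<^sup>2 < A\<^sup>2" using a_pos[OF \<open>0 < t\<close>] by simp
  then have "s t < sqrt (A\<^sup>2)" by (rule real_sqrt_less_mono)
  then show ?thesis using A_pos by simp
qed

lemma continuous_on_s: "continuous_on {0..} s"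
  using continuous_on_a by (intro continuous_intros)

lemma isCont_s: "0 < t \<Longrightarrow> isCont s t"
  using isCont_a by (intro continuous_intros)

lemma has_derivative_s:
  assumes "0 < t" "t < \<tau>"
  shows "(s has_real_derivative - (a t * a' t) / s t) (at t)"
proof -
  have "0 < s t" using s_pos assms by simp
  then show ?thesis
    using has_derivative_a[OF assms(1)]
    by (auto intro!: derivative_eq_intros simp: field_simps)
qed

lemma a_le_a'_bound: "0 < t \<Longrightarrow> t \<le> \<tau> \<Longrightarrow> a t \<le> A / a' \<tau> * a' t"
  using a_div_a'_mono[of t \<tau>] a'_pos[of t] by (simp add: divide_le_eq mult.commute)

definition psi :: "real \<Rightarrow> real" where
  "psi t = A * a' t / (s t * (A + s t))"

text \<open>\<open>psi\<close> is the derivative of \<open>a / (A + s)\<close>, which rises from \<open>0\<close> to \<open>1\<close> on \<open>[0, \<tau>]\<close>.\<close>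
lemma psi_has_integral: "(psi has_integral 1) {0..\<tau>}"
proof -
  let ?P = "\<lambda>t. a t / (A + s t)"
  have "(psi has_integral ?P \<tau> - ?P 0) {0..\<tau>}"
  proof (rule fundamental_theorem_of_calculus_interior)
    have "A + s t \<noteq> 0" if "t \<in> {0..\<tau>}" for t
    proof -
      have "0 \<le> s t" using that by (intro s_nonneg) auto
      then show ?thesis using A_pos by linarith
    qed
    moreover have "continuous_on {0..\<tau>} a" "continuous_on {0..\<tau>} s"
      using continuous_on_subset[OF continuous_on_a] continuous_on_subset[OF continuous_on_s] by auto
    ultimately show "continuous_on {0..\<tau>} ?P" by (intro continuous_intros) auto
  next
    fix t assume "t \<in> {0<..<\<tau>}"
    then have t: "0 < t" "t < \<tau>" by auto
    define S where "S = s t"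
    have S: "0 < S" "S * S = A * A - a t * a t"
      unfolding S_def using s_pos[of t] s_sq[of t] t by (auto simp: power2_eq_square)
    have ne: "A + S \<noteq> 0" using S A_pos by linarith
    have "(?P has_real_derivative
        (a' t * (A + S) - a t * (0 + - (a t * a' t) / S)) / ((A + S) * (A + S))) (at t)"
      unfolding S_def using S ne t
      by (intro DERIV_divide DERIV_add has_derivative_a has_derivative_s DERIV_const) (auto simp: S_def)
    also have "(a' t * (A + S) - a t * (0 + - (a t * a' t) / S)) / ((A + S) * (A + S)) = psi t"
    proof -
      have "a' t * (A + S) - a t * (0 + - (a t * a' t) / S) = a' t * (A * S + S * S + a t * a t) / S"
        using S by (simp add: field_simps)
      also have "\<dots> = A * a' t * (A + S) / S"
      proof -
        have "A * S + S * S + a t * a t = A * (A + S)" using S(2) by algebra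
        then show ?thesis by simp
      qed
      finally have numerator: "a' t * (A + S) - a t * (0 + - (a t * a' t) / S) = A * a' t * (A + S) / S" .
      show ?thesis
        unfolding psi_def S_def[symmetric] numerator using S(1) ne by (simp add: divide_divide_eq_left)
    qed
    finally show "(?P has_vector_derivative psi t) (at t)"
      by (simp add: has_real_derivative_iff_has_vector_derivative)
  qed (use tau_pos in auto)
  moreover have "?P \<tau> - ?P 0 = 1" using A_pos a_zero by simp
  ultimately show ?thesis by simp
qed

lemma psi_nonneg: "0 < t \<Longrightarrow> t < \<tau> \<Longrightarrow> 0 \<le> psi t"
  unfolding psi_def using A_pos a'_pos[of t] s_pos[of t] by simp

lemma psi_integrable_on_Ioo: "psi integrable_on {0<..<\<tau>}"
  using psi_has_integral integrable_on_open_interval_real by blast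

lemma integral_psi: "integral {0<..<\<tau>} psi = 1"
  using psi_has_integral integral_open_interval_real integral_unique by metis

lemma a_div_s_le_psi:
  assumes "0 < t" "t < \<tau>"
  shows "a t / s t \<le> 2 * A / a' \<tau> * psi t"
proof -
  have st: "0 < s t" "s t \<le> A" using s_pos s_le_A assms by auto
  have "a t / s t \<le> A / a' \<tau> * a' t / s t"
    using divide_right_mono[OF a_le_a'_bound[of t]] assms st by simp
  also have "\<dots> \<le> A / a' \<tau> * a' t * (2 * A / (s t * (A + s t)))"
  proof -
    have "s t * (A + s t) \<le> s t * (2 * A)" using st by (intro mult_left_mono) auto
    then have "1 / s t \<le> 2 * A / (s t * (A + s t))" using st by (simp add: field_simps)
    moreover have "0 \<le> A / a' \<tau> * a' t" using A_pos a'_pos[OF tau_pos] a'_pos[OF assms(1)] by simp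
    ultimately have "A / a' \<tau> * a' t * (1 / s t) \<le> A / a' \<tau> * a' t * (2 * A / (s t * (A + s t)))"
      by (rule mult_left_mono)
    then show ?thesis by simp
  qed
  also have "\<dots> = 2 * A / a' \<tau> * psi t" unfolding psi_def by simp
  finally show ?thesis .
qed

definition rho :: "real \<Rightarrow> real" where
  "rho t0 = integral {t0..\<tau>} (\<lambda>t. a t / s t)"

lemma continuous_on_a_div_s: "continuous_on {0<..<\<tau>} (\<lambda>t. a t / s t)"
proof (intro continuous_at_imp_continuous_on ballI)
  fix t assume "t \<in> {0<..<\<tau>}"
  then show "isCont (\<lambda>t. a t / s t) t"
    using s_pos[of t] by (intro continuous_intros isCont_a isCont_s) auto
qed

lemma a_div_s_integrable: "(\<lambda>t. a t / s t) integrable_on {0..\<tau>}"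
proof -
  have "(\<lambda>t. 2 * A / a' \<tau> * psi t) integrable_on {0<..<\<tau>}"
    using integrable_cmul[OF psi_integrable_on_Ioo, of "2 * A / a' \<tau>"] by simp
  then have "(\<lambda>t. a t / s t) integrable_on {0<..<\<tau>}"
  proof (rule integrable_on_Ioo_by_bound[OF continuous_on_a_div_s])
    fix t assume "t \<in> {0<..<\<tau>}"
    then show "\<bar>a t / s t\<bar> \<le> 2 * A / a' \<tau> * psi t"
      using a_div_s_le_psi[of t] a_pos[of t] s_pos[of t] by simp
  qed
  then show ?thesis using integrable_on_open_interval_real by blast
qed

lemma continuous_on_rho: "continuous_on {0..\<tau>} rho"
  unfolding rho_def by (rule indefinite_integral_continuous_1'[OF a_div_s_integrable])

lemma rho_tau: "rho \<tau> = 0"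
  by (simp add: rho_def)

lemma rho_zero: "rho 0 = fermi_radius a \<tau>"
  by (simp add: rho_def fermi_radius_def)

lemma rho_strict_antimono:
  assumes "0 \<le> x" "x < y" "y \<le> \<tau>"
  shows "rho y < rho x"
proof -
  have int: "(\<lambda>t. a t / s t) integrable_on {x..\<tau>}"
    using a_div_s_integrable by (rule integrable_subinterval_real) (use assms in auto)
  have "rho x = integral {x..y} (\<lambda>t. a t / s t) + rho y"
    unfolding rho_def using Henstock_Kurzweil_Integration.integral_combine[OF _ _ int, of y] assms by simp
  moreover have "0 < integral {x<..<y} (\<lambda>t. a t / s t)"
  proof (rule integral_Ioo_pos_if_pos_at)
    have "(\<lambda>t. a t / s t) integrable_on {x..y}"
      using int by (rule integrable_subinterval_real) (use assms in auto)
    then show "(\<lambda>t. a t / s t) integrable_on {x<..<y}"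
      using integrable_on_open_interval_real by blast
    show "continuous_on {x<..<y} (\<lambda>t. a t / s t)"
      using continuous_on_a_div_s by (rule continuous_on_subset) (use assms in auto)
    show "(x + y) / 2 \<in> {x<..<y}" "0 < a ((x + y) / 2) / s ((x + y) / 2)"
      using a_pos s_pos assms by auto
  qed (use a_nonneg s_pos assms in \<open>auto intro: divide_nonneg_pos\<close>)
  ultimately show ?thesis
    using integral_open_interval_real[of x y "\<lambda>t. a t / s t"] by linarith
qed

lemma rho_antimono: "0 \<le> x \<Longrightarrow> x \<le> y \<Longrightarrow> y \<le> \<tau> \<Longrightarrow> rho y \<le> rho x"
  using rho_strict_antimono[of x y] by (cases "x = y") auto

lemma fermi_t0:
  assumes "0 < \<rho>" "\<rho> < fermi_radius a \<tau>"
  shows "0 < fermi_t0 a \<tau> \<rho>" "fermi_t0 a \<tau> \<rho> < \<tau>" "rho (fermi_t0 a \<tau> \<rho>) = \<rho>"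
proof -
  obtain x where x: "0 \<le> x" "x \<le> \<tau>" "rho x = \<rho>"
    using IVT2'[of rho \<tau> \<rho> 0, OF _ _ _ continuous_on_rho] rho_tau rho_zero assms tau_pos by auto
  with assms rho_tau rho_zero have x': "0 < x" "x < \<tau>" by (auto simp: less_le)
  have "fermi_t0 a \<tau> \<rho> = x"
    unfolding fermi_t0_def
  proof (rule the_equality)
    show "0 < x \<and> x < \<tau> \<and> \<rho> = integral {x..\<tau>} (\<lambda>t. a t / s t)"
      using x x' by (simp add: rho_def)
  next
    fix y assume "0 < y \<and> y < \<tau> \<and> \<rho> = integral {y..\<tau>} (\<lambda>t. a t / s t)"
    then show "y = x"
      using rho_strict_antimono[of y x] rho_strict_antimono[of x y] x x'
      by (cases y x rule: linorder_cases) (auto simp: rho_def)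
  qed
  then show "0 < fermi_t0 a \<tau> \<rho>" "fermi_t0 a \<tau> \<rho> < \<tau>" "rho (fermi_t0 a \<tau> \<rho>) = \<rho>"
    using x x' by auto
qed

lemma fermi_t0_tendsto_zero:
  "filterlim (fermi_t0 a \<tau>) (at_right 0) (at_left (fermi_radius a \<tau>))"
  unfolding filterlim_at
proof
  have radius_pos: "0 < fermi_radius a \<tau>"
    using rho_strict_antimono[of 0 \<tau>] tau_pos rho_tau rho_zero by simp
  then have near: "\<forall>\<^sub>F \<rho> in at_left (fermi_radius a \<tau>). \<rho> \<in> {0<..<fermi_radius a \<tau>}"
    by (rule eventually_at_left_real)
  then show "\<forall>\<^sub>F \<rho> in at_left (fermi_radius a \<tau>). fermi_t0 a \<tau> \<rho> \<in> {0<..} \<and> fermi_t0 a \<tau> \<rho> \<noteq> 0"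
  proof eventually_elim
    case (elim \<rho>)
    then show ?case using fermi_t0(1)[of \<rho>] by auto
  qed
  show "(fermi_t0 a \<tau> \<longlongrightarrow> 0) (at_left (fermi_radius a \<tau>))"
  proof (rule order_tendstoI)
    fix y :: real assume "y < 0"
    show "\<forall>\<^sub>F \<rho> in at_left (fermi_radius a \<tau>). y < fermi_t0 a \<tau> \<rho>"
      using near
    proof eventually_elim
      case (elim \<rho>)
      then show ?case using fermi_t0(1)[of \<rho>] \<open>y < 0\<close> by auto
    qed
  next
    fix \<epsilon> :: real assume "0 < \<epsilon>"
    define \<delta> where "\<delta> = min \<epsilon> \<tau>"
    have \<delta>: "0 < \<delta>" "\<delta> \<le> \<tau>" "\<delta> \<le> \<epsilon>" using \<open>0 < \<epsilon>\<close> tau_pos by (auto simp: \<delta>_def)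
    then have "rho \<delta> < fermi_radius a \<tau>" using rho_strict_antimono[of 0 \<delta>] rho_zero by simp
    then have "\<forall>\<^sub>F \<rho> in at_left (fermi_radius a \<tau>). \<rho> \<in> {rho \<delta><..<fermi_radius a \<tau>}"
      by (rule eventually_at_left_real)
    then show "\<forall>\<^sub>F \<rho> in at_left (fermi_radius a \<tau>). fermi_t0 a \<tau> \<rho> < \<epsilon>"
    proof eventually_elim
      case (elim \<rho>)
      then have "0 < \<rho>" using rho_antimono[of \<delta> \<tau>] rho_tau \<delta> by auto
      with elim have "\<not> \<delta> \<le> fermi_t0 a \<tau> \<rho>"
        using fermi_t0[of \<rho>] rho_antimono[of \<delta> "fermi_t0 a \<tau> \<rho>"] \<delta> by auto
      then show ?case using \<delta> by simp
    qed
  qed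
qed

end

locale strongly_regular_scale_factor_at = scale_factor_at +
  fixes K :: real
  assumes K_ge_1: "1 \<le> K"
    and curvature_ratio_ge: "0 < t \<Longrightarrow> - K \<le> a t * a'' t / (a' t)\<^sup>2"
begin

definition g_integrand :: "real \<Rightarrow> real \<Rightarrow> real" where
  "g_integrand t0 t = a'' t / (a' t)\<^sup>2 * (s t0 / s t - 1)"

lemma abs_curvature_ratio_le: "0 < t \<Longrightarrow> \<bar>a'' t / (a' t)\<^sup>2 * a t\<bar> \<le> K"
  using curvature_ratio_le[of t] curvature_ratio_ge[of t] K_ge_1 by (simp add: abs_le_iff mult.commute)

lemma s_ratio_bound:
  assumes "0 \<le> t0" "t0 \<le> \<tau>/2" "t0 < t" "t < \<tau>"
  shows "0 \<le> s t0 / s t - 1" "s t0 / s t - 1 \<le> a t * (a t / s t) / s (\<tau>/2)"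
proof -
  define c v \<sigma> where "c = s t0" and "v = s t" and "\<sigma> = s (\<tau>/2)"
  have v: "0 < v" "v \<le> c" unfolding c_def v_def using s_pos s_antimono assms by auto
  have \<sigma>: "0 < \<sigma>" "\<sigma> \<le> c" unfolding c_def \<sigma>_def using s_pos s_antimono tau_pos assms by auto
  have "(c - v) * (c + v) = (a t)\<^sup>2 - (a t0)\<^sup>2"
    unfolding c_def v_def using s_sq[of t0] s_sq[of t] assms by (simp add: algebra_simps power2_eq_square)
  also have "\<dots> \<le> (a t)\<^sup>2" by simp
  finally have "c - v \<le> (a t)\<^sup>2 / (c + v)" using v by (simp add: field_simps)
  also have "\<dots> \<le> (a t)\<^sup>2 / \<sigma>" using v \<sigma> by (intro divide_left_mono) auto
  finally have "(c - v) / v \<le> (a t)\<^sup>2 / \<sigma> / v" by (rule divide_right_mono) (use v in simp)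
  moreover have "c / v - 1 = (c - v) / v" using v by (simp add: field_simps)
  ultimately show "c / v - 1 \<le> a t * (a t / v) / \<sigma>"
    by (simp add: power2_eq_square mult.commute)
  show "0 \<le> c / v - 1" using v by simp
qed

lemma g_integrand_dominated:
  "\<exists>M\<ge>0. \<forall>t0 t. 0 \<le> t0 \<longrightarrow> t0 \<le> \<tau>/2 \<longrightarrow> t0 < t \<longrightarrow> t < \<tau> \<longrightarrow> \<bar>g_integrand t0 t\<bar> \<le> M * psi t"
proof (intro exI conjI allI impI)
  define \<sigma> where "\<sigma> = s (\<tau>/2)"
  have \<sigma>: "0 < \<sigma>" unfolding \<sigma>_def using s_pos tau_pos by simp
  show "0 \<le> K / \<sigma> * (2 * A / a' \<tau>)"
    using K_ge_1 \<sigma> A_pos a'_pos[OF tau_pos] by simp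
  fix t0 t assume t: "0 \<le> t0" "t0 \<le> \<tau>/2" "t0 < t" "t < \<tau>"
  define r q x where "r = a'' t / (a' t)\<^sup>2" and "q = s t0 / s t - 1" and "x = a t / s t"
  have q: "0 \<le> q" "q \<le> a t * x / \<sigma>"
    unfolding q_def x_def \<sigma>_def using s_ratio_bound[OF t] by simp_all
  have x: "0 \<le> x" "x \<le> 2 * A / a' \<tau> * psi t"
    unfolding x_def using a_div_s_le_psi[of t] a_pos[of t] s_pos[of t] t by simp_all
  have r: "\<bar>r * a t\<bar> \<le> K"
    unfolding r_def using abs_curvature_ratio_le[of t] t by simp
  have "\<bar>g_integrand t0 t\<bar> = \<bar>r\<bar> * q"
    unfolding g_integrand_def r_def[symmetric] q_def[symmetric] using q(1) by (simp add: abs_mult)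
  also have "\<dots> \<le> \<bar>r\<bar> * (a t * x / \<sigma>)"
    using q(2) by (rule mult_left_mono) simp
  also have "\<dots> = \<bar>r * a t\<bar> * x / \<sigma>"
    using a_pos[of t] t by (simp add: abs_mult)
  also have "\<dots> \<le> K * x / \<sigma>"
    using r x(1) \<sigma> by (intro divide_right_mono mult_right_mono) auto
  also have "\<dots> \<le> K * (2 * A / a' \<tau> * psi t) / \<sigma>"
    using x(2) K_ge_1 \<sigma> by (intro divide_right_mono mult_left_mono) auto
  also have "\<dots> = K / \<sigma> * (2 * A / a' \<tau>) * psi t"
    by (simp add: ac_simps)
  finally show "\<bar>g_integrand t0 t\<bar> \<le> K / \<sigma> * (2 * A / a' \<tau>) * psi t" .
qed

lemma continuous_on_g_integrand: "continuous_on {0<..<\<tau>} (g_integrand t0)"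
proof (intro continuous_at_imp_continuous_on ballI)
  fix t assume "t \<in> {0<..<\<tau>}"
  then have "0 < t" "s t \<noteq> 0" "a' t \<noteq> 0"
    using s_pos[of t] a'_nonzero[of t] by auto
  then show "isCont (g_integrand t0) t"
    unfolding g_integrand_def by (intro continuous_intros isCont_a isCont_a' isCont_a'' isCont_s) simp_all
qed

lemma g_integrand_integrable:
  assumes "0 \<le> t0" "t0 \<le> \<tau>/2"
  shows "g_integrand t0 integrable_on {t0<..<\<tau>}"
proof -
  obtain M where "0 \<le> M"
    and M: "\<And>t0 t. 0 \<le> t0 \<Longrightarrow> t0 \<le> \<tau>/2 \<Longrightarrow> t0 < t \<Longrightarrow> t < \<tau> \<Longrightarrow> \<bar>g_integrand t0 t\<bar> \<le> M * psi t"
    using g_integrand_dominated by blast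
  have "continuous_on {t0<..<\<tau>} (g_integrand t0)"
    using continuous_on_g_integrand by (rule continuous_on_subset) (use assms in auto)
  moreover have "psi integrable_on {t0..\<tau>}"
    using has_integral_integrable[OF psi_has_integral] by (rule integrable_subinterval_real) (use assms in simp)
  then have "(\<lambda>t. M * psi t) integrable_on {t0<..<\<tau>}"
    using integrable_on_cmult_left[of psi _ M] by (simp add: integrable_on_open_interval_real)
  moreover have "\<bar>g_integrand t0 t\<bar> \<le> M * psi t" if "t \<in> {t0<..<\<tau>}" for t
    using M[OF assms] that by simp
  ultimately show ?thesis
    by (rule integrable_on_Ioo_by_bound)
qed

lemma g_integral_tendsto:
  "((\<lambda>t0. integral {t0..\<tau>} (g_integrand t0)) \<longlongrightarrow> integral {0..\<tau>} (g_integrand 0)) (at_right 0)"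
proof (rule tendsto_at_right_sequentially[of 0 "\<tau>/2"])
  fix S :: "nat \<Rightarrow> real"
  assume S: "\<And>n. 0 < S n" "\<And>n. S n < \<tau>/2" and "S \<longlonglongrightarrow> 0"
  obtain M where "0 \<le> M"
    and M: "\<And>t0 t. 0 \<le> t0 \<Longrightarrow> t0 \<le> \<tau>/2 \<Longrightarrow> t0 < t \<Longrightarrow> t < \<tau> \<Longrightarrow> \<bar>g_integrand t0 t\<bar> \<le> M * psi t"
    using g_integrand_dominated by blast
  define f where "f n t = (if t \<in> {S n<..} then g_integrand (S n) t else 0)" for n t
  have Ioo: "{S n<..} \<inter> {0<..<\<tau>} = {S n<..<\<tau>}" for n
    using S(1)[of n] by auto
  have "f n integrable_on {0<..<\<tau>}" for n
    unfolding f_def integrable_restrict_Int Ioo using g_integrand_integrable[of "S n"] S(1,2)[of n] by simp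
  moreover have "(\<lambda>t. M * psi t) integrable_on {0<..<\<tau>}"
    using integrable_cmul[OF psi_integrable_on_Ioo, of M] by simp
  moreover have "norm (f n t) \<le> M * psi t" if "t \<in> {0<..<\<tau>}" for n t
  proof (cases "S n < t")
    case True
    then show ?thesis using M[of "S n" t] S(1,2)[of n] that by (simp add: f_def)
  next
    case False
    then show ?thesis using psi_nonneg[of t] \<open>0 \<le> M\<close> that by (simp add: f_def)
  qed
  moreover have "(\<lambda>n. f n t) \<longlonglongrightarrow> g_integrand 0 t" if t: "t \<in> {0<..<\<tau>}" for t
  proof -
    have "\<forall>x. \<forall>l\<in>{0..}. (\<forall>n. x n \<in> {0..}) \<and> x \<longlonglongrightarrow> l \<longrightarrow> (s \<circ> x) \<longlonglongrightarrow> s l"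
      using continuous_on_s by (simp only: continuous_on_sequentially)
    moreover have "\<forall>n. S n \<in> {0..}" using S(1) by (simp add: less_imp_le)
    ultimately have "(s \<circ> S) \<longlonglongrightarrow> s 0"
      using \<open>S \<longlonglongrightarrow> 0\<close> by blast
    then have "(\<lambda>n. s (S n)) \<longlonglongrightarrow> s 0" by (simp add: comp_def)
    moreover have "s t \<noteq> 0" using s_pos[of t] t by simp
    ultimately have "(\<lambda>n. g_integrand (S n) t) \<longlonglongrightarrow> g_integrand 0 t"
      unfolding g_integrand_def
      by (intro tendsto_mult_left tendsto_diff[OF _ tendsto_const] tendsto_divide[OF _ tendsto_const])
    moreover have "\<forall>\<^sub>F n in sequentially. g_integrand (S n) t = f n t"
      using order_tendstoD(2)[OF \<open>S \<longlonglongrightarrow> 0\<close>, of t] t by (auto simp: f_def elim: eventually_mono)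
    ultimately show ?thesis by (rule Lim_transform_eventually)
  qed
  ultimately have "(\<lambda>n. integral {0<..<\<tau>} (f n)) \<longlonglongrightarrow> integral {0<..<\<tau>} (g_integrand 0)"
    by (rule dominated_convergence(2))
  moreover have "integral {0<..<\<tau>} (f n) = integral {S n..\<tau>} (g_integrand (S n))" for n
    unfolding f_def integral_restrict_Int Ioo integral_open_interval_real ..
  ultimately show "(\<lambda>n. integral {S n..\<tau>} (g_integrand (S n))) \<longlonglongrightarrow> integral {0..\<tau>} (g_integrand 0)"
    by (simp add: integral_open_interval_real)
qed (use tau_pos in simp)

lemma psi_alt_def:
  assumes "0 < t" "t < \<tau>"
  shows "psi t = A * a' t * (A / s t - 1) / (a t)\<^sup>2"
proof -
  define S where "S = s t"
  have S: "0 < S" "S < A" "(a t)\<^sup>2 = (A - S) * (A + S)"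
    unfolding S_def using s_pos s_lt_A s_sq[of t] assms by (auto simp: algebra_simps power2_eq_square)
  have "A / S - 1 = (A - S) / S"
    using S by (simp add: field_simps)
  then have "A * a' t * (A / S - 1) / (a t)\<^sup>2 = A * a' t * (A - S) / (S * ((A - S) * (A + S)))"
    unfolding S(3) by simp
  also have "\<dots> = A * a' t / (S * (A + S))"
    using S by simp
  finally show ?thesis unfolding psi_def S_def by simp
qed

lemma A_div_s_gt_1: "0 < t \<Longrightarrow> t < \<tau> \<Longrightarrow> 1 < A / s t"
  using s_pos[of t] s_lt_A[of t] by simp

lemma psi_minus_g_integrand_ge:
  assumes "0 < t" "t < \<tau>"
  shows "(A / s t - 1) / a t * (A * a' t / a t - a' \<tau>) \<le> psi t - a' \<tau> * g_integrand 0 t"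
proof -
  define q where "q = A / s t - 1"
  have at: "0 < a t" using a_pos assms by simp
  have q: "0 \<le> q" unfolding q_def using A_div_s_gt_1[OF assms] by simp
  have "a'' t / (a' t)\<^sup>2 \<le> 1 / a t"
    using curvature_ratio_le[of t] at assms by (simp add: field_simps)
  then have "a'' t / (a' t)\<^sup>2 * q \<le> 1 / a t * q"
    using q by (rule mult_right_mono)
  then have "a' \<tau> * (a'' t / (a' t)\<^sup>2 * q) \<le> a' \<tau> * (1 / a t * q)"
    by (rule mult_left_mono) (use a'_pos[OF tau_pos] in simp)
  moreover have "psi t - a' \<tau> * g_integrand 0 t = A * a' t * q / (a t)\<^sup>2 - a' \<tau> * (a'' t / (a' t)\<^sup>2 * q)"
    unfolding psi_alt_def[OF assms] g_integrand_def s_zero q_def ..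
  moreover have "q / a t * (A * a' t / a t - a' \<tau>) = A * a' t * q / (a t)\<^sup>2 - a' \<tau> * (1 / a t * q)"
    using at by (simp add: field_simps power2_eq_square)
  ultimately show ?thesis unfolding q_def by linarith
qed

lemma a'_tau_le_A_mul_a'_div_a:
  assumes "0 < t" "t \<le> \<tau>"
  shows "a' \<tau> \<le> A * a' t / a t"
    and "a t / a' t < A / a' \<tau> \<Longrightarrow> a' \<tau> < A * a' t / a t"
  using a_div_a'_mono[OF assms] a_pos[OF assms(1)] a'_pos[OF assms(1)] a'_pos[OF tau_pos]
  by (simp_all add: field_simps)

lemma continuous_on_psi: "continuous_on {0<..<\<tau>} psi"
proof (intro continuous_at_imp_continuous_on ballI)
  fix t assume "t \<in> {0<..<\<tau>}"
  then have "0 < t" "0 < s t" using s_pos[of t] by auto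
  then have "s t * (A + s t) \<noteq> 0"
    using A_pos by (intro dual_order.strict_implies_not_eq mult_pos_pos add_pos_pos)
  then show "isCont psi t"
    unfolding psi_def using \<open>0 < t\<close> by (intro continuous_intros isCont_a isCont_a' isCont_s)
qed

lemma one_minus_g_integral_pos: "0 < 1 - a' \<tau> * integral {0..\<tau>} (g_integrand 0)"
proof -
  define W where "W t = psi t - a' \<tau> * g_integrand 0 t" for t
  have g0_int: "g_integrand 0 integrable_on {0<..<\<tau>}"
    using g_integrand_integrable tau_pos by simp
  have g0_int': "(\<lambda>t. a' \<tau> * g_integrand 0 t) integrable_on {0<..<\<tau>}"
    using integrable_on_cmult_left[OF g0_int, of "a' \<tau>"] by simp
  have W_int: "W integrable_on {0<..<\<tau>}"
    unfolding W_def by (rule integrable_diff[OF psi_integrable_on_Ioo g0_int'])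
  have "integral {0<..<\<tau>} W = 1 - a' \<tau> * integral {0..\<tau>} (g_integrand 0)"
    unfolding W_def
    using integral_diff[OF psi_integrable_on_Ioo g0_int']
    by (simp add: integral_psi integral_open_interval_real)
  moreover obtain t1 where t1: "t1 \<in> {0<..<\<tau>}" "a t1 / a' t1 < A / a' \<tau>"
    using a_div_a'_not_constant[OF tau_pos] by blast
  have "0 < integral {0<..<\<tau>} W"
  proof (rule integral_Ioo_pos_if_pos_at[OF W_int _ _ t1(1)])
    show "continuous_on {0<..<\<tau>} W"
      unfolding W_def by (intro continuous_intros continuous_on_psi continuous_on_g_integrand)
  next
    fix t assume "t \<in> {0<..<\<tau>}"
    then have t: "0 < t" "t < \<tau>" by auto
    have "0 \<le> (A / s t - 1) / a t * (A * a' t / a t - a' \<tau>)"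
      using A_div_s_gt_1[OF t] a_pos[OF t(1)] a'_tau_le_A_mul_a'_div_a(1)[of t] t by simp
    then show "0 \<le> W t"
      unfolding W_def using psi_minus_g_integrand_ge[OF t] by linarith
  next
    have t: "0 < t1" "t1 < \<tau>" using t1 by auto
    have "0 < (A / s t1 - 1) / a t1 * (A * a' t1 / a t1 - a' \<tau>)"
      using A_div_s_gt_1[OF t] a_pos[OF t(1)] a'_tau_le_A_mul_a'_div_a(2)[of t1] t1 by simp
    then show "0 < W t1"
      unfolding W_def using psi_minus_g_integrand_ge[OF t] by linarith
  qed
  ultimately show ?thesis by simp
qed

end

theorem theorem4p2:
  fixes a a' a'' :: "real \<Rightarrow> real" and \<tau> :: real
  assumes "strongly_regular_scale_factor a a' a''"
    and "\<tau> > 0"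
  defines "F \<equiv> (\<lambda>t. a'' t / (a' t)\<^sup>2 * (a \<tau> / sqrt ((a \<tau>)\<^sup>2 - (a t)\<^sup>2) - 1))"
  defines "L \<equiv> - (1 - a' \<tau> * integral {0..\<tau>} F)\<^sup>2"
  shows "F integrable_on {0..\<tau>} \<and>
         ((\<lambda>\<rho>. g_tautau a a' a'' \<tau> \<rho>) \<longlongrightarrow> L) (at_left (fermi_radius a \<tau>)) \<and>
         0 < - L"
proof -
  obtain K where "regular_scale_factor a a' a''" "1 \<le> K" "\<forall>t>0. - K \<le> a t * a'' t / (a' t)\<^sup>2"
    using assms(1) unfolding strongly_regular_scale_factor_def by blast
  then interpret strongly_regular_scale_factor_at a a' a'' \<tau> K
    using assms(2) by unfold_locales auto
  have F: "F = g_integrand 0"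
    unfolding F_def g_integrand_def s_zero ..
  have g_tautau: "g_tautau a a' a'' \<tau> =
      (\<lambda>\<rho>. - (1 - a' \<tau> * integral {fermi_t0 a \<tau> \<rho>..\<tau>} (g_integrand (fermi_t0 a \<tau> \<rho>)))\<^sup>2)"
    unfolding g_tautau_def g_integrand_def Let_def ..
  have "((\<lambda>t0. - (1 - a' \<tau> * integral {t0..\<tau>} (g_integrand t0))\<^sup>2) \<longlongrightarrow> L) (at_right 0)"
    unfolding L_def F by (intro tendsto_intros g_integral_tendsto)
  then have "(g_tautau a a' a'' \<tau> \<longlongrightarrow> L) (at_left (fermi_radius a \<tau>))"
    unfolding g_tautau by (rule filterlim_compose[OF _ fermi_t0_tendsto_zero])
  moreover have "F integrable_on {0..\<tau>}"
    using g_integrand_integrable[of 0] assms(2) F by (simp add: integrable_on_open_interval_real)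
  moreover have "0 < - L"
    unfolding L_def F using one_minus_g_integral_pos by simp
  ultimately show ?thesis by simp
qed

end
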